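(* Let $G=(V,E)$ be a finite, undirected, unweighted, connected graph with $n=|V|$, and let $k$ be the length of a shortest walk in $G$ visiting every vertex at least once. The CNOT cost of the QFT circuit produced by the construction in the context is at most $3kn-2n$.
   Context: A walk is a sequence $(u_1,\dots,u_h)$ of vertices with consecutive entries adjacent (repetitions allowed), of length $h$. Each vertex carries one physical qubit; two-qubit gates only act on qubits at adjacent vertices. Gates: Hadamard $H$; controlled phase $CR_d=\mathrm{diag}(1,1,1,e^{i\pi/2^{d-1}})$; SWAP. Construction: let $P$ be a shortest walk in $G$ visiting all vertices. Place logical qubit $r$ ($1\le r\le n$) on the $r$-th distinct vertex of $P$ in order of first occurrence; whenever a SWAP is applied the logical qubits on its two vertices exchange places. Let $R=V$. For $r=1,\dots,n$: let $P'=(u_1,\dots,u_{k'})$ be $P$ if $r=1$, and otherwise a shortest walk in the induced subgraph $G[R]$ that starts at the vertex currently holding logical qubit $r$ and visits every vertex of $R$. Cascade $r$: apply $H$ to $u_1$; $j=1$, $U=\emptyset$; while $j\le k'-1$: (i) if $u_{j+1}\notin U$, apply $CR_d$ with control $u_{j+1}$, target $u_j$, where $d$ is (index of the logical qubit on $u_{j+1}$) $-\,r$, and add $u_{j+1}$ to $U$; (ii) if $j\le k'-2$ and $u_{j+2}=u_j$, set $j\leftarrow j+2$; otherwise, if $k'\ne 2$ apply SWAP to $u_j,u_{j+1}$, and set $j\leftarrow j+1$. After cascade $r$, remove from $R$ the vertex holding logical qubit $r$. CNOT cost: number of CNOTs after decomposition, counting $H$ as 0, each $CR_d$ as 2, each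 SWAP as 3, and a $CR_d$ immediately followed by a SWAP on the same two qubits as 3 in total. *)

theory Defs
  imports Main
begin

definition walk_in :: "'a set \<Rightarrow> ('a \<Rightarrow> 'a \<Rightarrow> bool) \<Rightarrow> 'a list \<Rightarrow> bool" where
  "walk_in S E xs \<longleftrightarrow> xs \<noteq> [] \<and> set xs \<subseteq> S \<and>
     (\<forall>i. Suc i < length xs \<longrightarrow> E (xs ! i) (xs ! Suc i))"

definition covering_walk :: "'a set \<Rightarrow> ('a \<Rightarrow> 'a \<Rightarrow> bool) \<Rightarrow> 'a list \<Rightarrow> bool" where
  "covering_walk S E xs \<longleftrightarrow> walk_in S E xs \<and> set xs = S"

definition shortest_covering_walk :: "'a set \<Rightarrow> ('a \<Rightarrow> 'a \<Rightarrow> bool) \<Rightarrow> 'a list \<Rightarrow> bool" where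
  "shortest_covering_walk S E xs \<longleftrightarrow> covering_walk S E xs \<and>
     (\<forall>ys. covering_walk S E ys \<longrightarrow> length xs \<le> length ys)"

definition shortest_covering_walk_from :: "'a set \<Rightarrow> ('a \<Rightarrow> 'a \<Rightarrow> bool) \<Rightarrow> 'a \<Rightarrow> 'a list \<Rightarrow> bool" where
  "shortest_covering_walk_from S E v xs \<longleftrightarrow> covering_walk S E xs \<and> hd xs = v \<and>
     (\<forall>ys. covering_walk S E ys \<and> hd ys = v \<longrightarrow> length xs \<le> length ys)"

definition min_cover_walk_length :: "'a set \<Rightarrow> ('a \<Rightarrow> 'a \<Rightarrow> bool) \<Rightarrow> nat" where
  "min_cover_walk_length V E = (LEAST h. \<exists>xs. covering_walk V E xs \<and> length xs = h)"

text \<open>Gates acting on (the qubits at) vertices: Hadamard, CR_d with control and target, SWAP.\<close>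
datatype 'a gate = Had 'a | CR int 'a 'a | SWAP 'a 'a

fun cnot_cost :: "'a gate list \<Rightarrow> nat" where
  "cnot_cost [] = 0"
| "cnot_cost (CR d c t # SWAP a b # rest) =
     (if {c, t} = {a, b} then 3 + cnot_cost rest else 2 + cnot_cost (SWAP a b # rest))"
| "cnot_cost (CR d c t # rest) = 2 + cnot_cost rest"
| "cnot_cost (SWAP a b # rest) = 3 + cnot_cost rest"
| "cnot_cost (Had v # rest) = cnot_cost rest"

text \<open>Placement q: q v is the index of the logical qubit currently on vertex v.
The loop of a cascade, run on the suffix (u_j, ..., u_k') of the walk.
Arguments: r, ns (= no swaps, i.e. k' = 2), the set U, the placement.\<close>
fun casc :: "nat \<Rightarrow> bool \<Rightarrow> 'a set \<Rightarrow> ('a \<Rightarrow> nat) \<Rightarrow> 'a list \<Rightarrow> 'a gate list \<times> ('a \<Rightarrow> nat)" where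
  "casc r ns U q (a # b # rest) =
     (let g1 = (if b \<notin> U then [CR (int (q b) - int r) b a] else []);
          U' = insert b U
      in if rest \<noteq> [] \<and> hd rest = a
         then (let (gs, q') = casc r ns U' q rest in (g1 @ gs, q'))
         else (let q1 = (if ns then q else q(a := q b, b := q a));
                   g2 = (if ns then [] else [SWAP a b]);
                   (gs, q') = casc r ns U' q1 (b # rest)
               in (g1 @ g2 @ gs, q')))"
| "casc r ns U q xs = ([], q)"

definition cascade :: "nat \<Rightarrow> 'a list \<Rightarrow> ('a \<Rightarrow> nat) \<Rightarrow> 'a gate list \<times> ('a \<Rightarrow> nat)" where
  "cascade r w q = (let (gs, q') = casc r (length w = 2) {} q w in (Had (hd w) # gs, q'))"

definition init_place :: "'a list \<Rightarrow> 'a \<Rightarrow> nat" where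
  "init_place P v = (if v \<in> set P then Suc (THE i. i < length (remdups P) \<and> remdups P ! i = v) else 0)"

text \<open>W r is the walk P' used in cascade r (W 1 = P).  place W r = placement after cascade r.\<close>
primrec place :: "(nat \<Rightarrow> 'a list) \<Rightarrow> nat \<Rightarrow> 'a \<Rightarrow> nat" where
  "place W 0 = init_place (W 1)"
| "place W (Suc r) = snd (cascade (Suc r) (W (Suc r)) (place W r))"

text \<open>remaining V W (r-1) is the set R used in cascade r.\<close>
primrec remaining :: "'a set \<Rightarrow> (nat \<Rightarrow> 'a list) \<Rightarrow> nat \<Rightarrow> 'a set" where
  "remaining V W 0 = V"
| "remaining V W (Suc r) = remaining V W r - {v. place W (Suc r) v = Suc r}"

definition valid_walks :: "'a set \<Rightarrow> ('a \<Rightarrow> 'a \<Rightarrow> bool) \<Rightarrow> (nat \<Rightarrow> 'a list) \<Rightarrow> bool" where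
  "valid_walks V E W \<longleftrightarrow> shortest_covering_walk V E (W 1) \<and>
     (\<forall>r. 2 \<le> r \<and> r \<le> card V \<longrightarrow>
        hd (W r) \<in> remaining V W (r - 1) \<and> place W (r - 1) (hd (W r)) = r \<and>
        shortest_covering_walk_from (remaining V W (r - 1)) E (hd (W r)) (W r))"

definition qft_circuit :: "'a set \<Rightarrow> (nat \<Rightarrow> 'a list) \<Rightarrow> 'a gate list" where
  "qft_circuit V W = concat (map (\<lambda>r. fst (cascade r (W r) (place W (r - 1)))) [1..<card V + 1])"

end

(* Cascade r runs along a walk covering the set R of the n - r + 1 vertices still
   holding qubits r, ..., n, and costs at most 3 CNOTs per step of that walk, a CR
   merged with the following SWAP costing 3.  Since R admits a covering walk, a
   depth-first traversal of a spanning tree gives a covering walk of length 2|R| - 1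
   from any start vertex, so the shortest one is no longer and cascade r costs at most
   6(n - r).  Summing over r gives 3n(n - 1), which is at most 3kn - 2n as k >= n. *)
theory Submission
  imports Defs
begin

lemma walk_in_singleton [simp]: "walk_in S E [x] \<longleftrightarrow> x \<in> S"
  by (simp add: walk_in_def)

lemma walk_in_Cons_Cons [simp]:
  "walk_in S E (x # y # xs) \<longleftrightarrow> x \<in> S \<and> E x y \<and> walk_in S E (y # xs)"
  by (auto simp: walk_in_def less_Suc_eq_0_disj)

lemma walk_in_hd: "walk_in S E (x # xs) \<Longrightarrow> x \<in> S"
  by (simp add: walk_in_def)

lemma walk_in_append_Cons:
  "walk_in S E (xs @ x # ys) \<longleftrightarrow> walk_in S E (xs @ [x]) \<and> walk_in S E (x # ys)"
  by (induction xs rule: induct_list012) (auto dest: walk_in_hd)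

lemma walk_in_detour:
  assumes "walk_in S E (xs @ x # ys)" and "y \<in> S" and "E x y" and "E y x"
  shows "walk_in S E (xs @ x # y # x # ys)"
  using assms walk_in_append_Cons[of S E xs x ys] walk_in_append_Cons[of S E xs x "y # x # ys"]
  by (auto dest: walk_in_hd)

lemma adjacent_change_in_list:
  assumes "a \<in> set xs" "P a" "b \<in> set xs" "\<not> P b"
  shows "\<exists>i. Suc i < length xs \<and> P (xs ! i) \<noteq> P (xs ! Suc i)"
  using assms
proof (induction xs arbitrary: a b)
  case (Cons x xs)
  show ?case
  proof (cases xs)
    case Nil
    with Cons.prems show ?thesis by auto
  next
    case (Cons y ys)
    show ?thesis
    proof (cases "P x = P y")
      case True
      have "(if a = x then y else a) \<in> set xs" "(if b = x then y else b) \<in> set xs"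
        using Cons \<open>a \<in> set (x # xs)\<close> \<open>b \<in> set (x # xs)\<close> by auto
      then obtain i where "Suc i < length xs" "P (xs ! i) \<noteq> P (xs ! Suc i)"
        using Cons.IH[of "if a = x then y else a" "if b = x then y else b"] Cons.prems True
        by (auto split: if_splits)
      then show ?thesis by (intro exI[of _ "Suc i"]) simp
    next
      case False
      then show ?thesis using Cons by (intro exI[of _ 0]) simp
    qed
  qed
qed simp

lemma walk_in_crossing_edge:
  assumes "walk_in S E w" "symp E" "a \<in> set w" "a \<in> T" "b \<in> set w" "b \<notin> T"
  shows "\<exists>x y. x \<in> T \<and> y \<in> set w - T \<and> E x y"
proof -
  obtain i where i: "Suc i < length w" "(w ! i \<in> T) \<noteq> (w ! Suc i \<in> T)"
    using adjacent_change_in_list[of a w "\<lambda>x. x \<in> T" b] assms by auto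
  have "E (w ! i) (w ! Suc i)" "E (w ! Suc i) (w ! i)"
    using assms(1,2) i(1) by (auto simp: walk_in_def dest: sympD)
  with i show ?thesis by (metis Diff_iff Suc_lessD nth_mem)
qed

(* Depth-first growth: a detour x y x along an edge leaving the visited set adds one
   vertex and two steps, the walk of a DFS traversal of a spanning tree. *)
lemma exists_walk_with_card_set:
  assumes cover: "covering_walk S E ws" and "symp E" and "v \<in> S"
    and "1 \<le> m" and "m \<le> card S"
  shows "\<exists>w. walk_in S E w \<and> hd w = v \<and> card (set w) = m \<and> length w = 2 * m - 1"
  using \<open>1 \<le> m\<close> \<open>m \<le> card S\<close>
proof (induction m rule: nat_induct_at_least)
  case base
  show ?case using \<open>v \<in> S\<close> by (intro exI[of _ "[v]"]) simp
next
  case (Suc m)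
  then obtain w where w: "walk_in S E w" "hd w = v" "card (set w) = m" "length w = 2 * m - 1"
    by auto
  have ws: "walk_in S E ws" "set ws = S" using cover by (auto simp: covering_walk_def)
  have "w \<noteq> []" using w(3) \<open>1 \<le> m\<close> by auto
  then have "v \<in> set w" using w(2) by auto
  moreover obtain b where "b \<in> S - set w"
  proof -
    have "set w \<noteq> S" using Suc.prems w(3) by auto
    moreover have "set w \<subseteq> S" using w(1) by (simp add: walk_in_def)
    ultimately show ?thesis using that by blast
  qed
  ultimately obtain x y where xy: "x \<in> set w" "y \<in> S - set w" "E x y"
    using walk_in_crossing_edge[OF ws(1) \<open>symp E\<close>, of v "set w" b] ws(2) \<open>v \<in> S\<close> by auto
  obtain as bs where w_split: "w = as @ x # bs" using split_list[OF xy(1)] by blast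
  let ?w' = "as @ x # y # x # bs"
  have "walk_in S E ?w'"
    using walk_in_detour[of S E as x bs y] w(1) w_split xy \<open>symp E\<close> by (auto dest: sympD)
  moreover have "hd ?w' = v" using w(2) w_split by (cases as) simp_all
  moreover have "card (set ?w') = Suc m"
  proof -
    have "set ?w' = insert y (set w)" using w_split by auto
    then show ?thesis using w(3) xy(2) by simp
  qed
  moreover have "length ?w' = 2 * Suc m - 1" using w(4) w_split \<open>1 \<le> m\<close> by simp
  ultimately show ?case by blast
qed

lemma exists_covering_walk_from_length:
  assumes "covering_walk S E ws" and "symp E" and "v \<in> S"
  shows "\<exists>w. covering_walk S E w \<and> hd w = v \<and> length w = 2 * card S - 1"
proof -
  have "finite S" using assms(1) by (metis covering_walk_def finite_set)
  then have "1 \<le> card S" using assms(3) by (metis One_nat_def Suc_leI card_gt_0_iff empty_iff)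
  then obtain w where w: "walk_in S E w" "hd w = v" "card (set w) = card S" "length w = 2 * card S - 1"
    using exists_walk_with_card_set[OF assms] by blast
  have "set w = S" using w(1,3) \<open>finite S\<close> by (simp add: card_subset_eq walk_in_def)
  with w show ?thesis by (auto simp: covering_walk_def)
qed

lemma shortest_covering_walk_from_length_le:
  assumes "shortest_covering_walk_from S E v w" and "symp E"
  shows "length w \<le> 2 * card S - 1"
proof -
  have cover: "covering_walk S E w" and "hd w = v"
    using assms(1) by (auto simp: shortest_covering_walk_from_def)
  then have "v \<in> S" by (auto simp: covering_walk_def walk_in_def)
  then obtain w' where "covering_walk S E w'" "hd w' = v" "length w' = 2 * card S - 1"
    using exists_covering_walk_from_length[OF cover assms(2)] by blast
  with assms(1) show ?thesis by (metis shortest_covering_walk_from_def)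
qed

lemma cnot_cost_CR_Cons_le: "cnot_cost (CR d c t # gs) \<le> 2 + cnot_cost gs"
  by (cases gs rule: cnot_cost.cases) auto

lemma cnot_cost_append_le: "cnot_cost (gs @ hs) \<le> cnot_cost gs + cnot_cost hs"
  by (induction gs rule: cnot_cost.induct) (auto intro: order.trans[OF cnot_cost_CR_Cons_le])

lemma cnot_cost_concat_le: "cnot_cost (concat gss) \<le> (\<Sum>gs\<leftarrow>gss. cnot_cost gs)"
  by (induction gss) (auto intro: order.trans[OF cnot_cost_append_le])

lemma casc_cost_le: "cnot_cost (fst (casc r ns U q w)) \<le> 3 * (length w - 1)"
proof (induction r ns U q w rule: casc.induct)
  case (1 r ns U q a b rest)
  define g1 where "g1 = (if b \<notin> U then [CR (int (q b) - int r) b a] else [])"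
  define g2 where "g2 = (if ns then [] else [SWAP a b])"
  define q1 where "q1 = (if ns then q else q(a := q b, b := q a))"
  have "cnot_cost g1 \<le> 2" by (simp add: g1_def)
  have "cnot_cost (g1 @ g2) \<le> 3" by (simp add: g1_def g2_def insert_commute)
  show ?case
  proof (cases "rest \<noteq> [] \<and> hd rest = a")
    case True
    let ?gs = "fst (casc r ns (insert b U) q rest)"
    have "cnot_cost (fst (casc r ns U q (a # b # rest))) = cnot_cost (g1 @ ?gs)"
      using True by (simp add: g1_def Let_def case_prod_beta)
    also have "\<dots> \<le> 2 + 3 * (length rest - 1)"
      using "1.IH"(1)[OF g1_def _ True] \<open>cnot_cost g1 \<le> 2\<close> cnot_cost_append_le[of g1 ?gs] by simp
    also have "\<dots> \<le> 3 * (length (a # b # rest) - 1)" by simp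
    finally show ?thesis .
  next
    case False
    let ?gs = "fst (casc r ns (insert b U) q1 (b # rest))"
    have "cnot_cost (fst (casc r ns U q (a # b # rest))) = cnot_cost ((g1 @ g2) @ ?gs)"
      using False by (auto simp: g1_def g2_def q1_def Let_def case_prod_beta)
    also have "\<dots> \<le> 3 + 3 * length rest"
      using "1.IH"(2)[OF g1_def _ False q1_def g2_def] \<open>cnot_cost (g1 @ g2) \<le> 3\<close>
        cnot_cost_append_le[of "g1 @ g2" ?gs] by simp
    finally show ?thesis by simp
  qed
qed simp_all

lemma cascade_cost_le: "cnot_cost (fst (cascade r w q)) \<le> 3 * (length w - 1)"
  using casc_cost_le[of r "length w = 2" "{}" q w] by (simp add: cascade_def case_prod_beta)

lemma image_swap_eq:
  assumes "a \<in> S" "b \<in> S"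
  shows "q(a := q b, b := q a) ` S = q ` S"
  using assms by (force simp: image_iff)

lemma casc_image:
  "set w \<subseteq> S \<Longrightarrow> snd (casc r ns U q w) ` S = q ` S"
proof (induction r ns U q w rule: casc.induct)
  case (1 r ns U q a b rest)
  define g1 where "g1 = (if b \<notin> U then [CR (int (q b) - int r) b a] else [])"
  define g2 where "g2 = (if ns then [] else [SWAP a b])"
  define q1 where "q1 = (if ns then q else q(a := q b, b := q a))"
  show ?case
  proof (cases "rest \<noteq> [] \<and> hd rest = a")
    case True
    then show ?thesis using "1.IH"(1)[OF g1_def _ True] "1.prems"
      by (simp add: Let_def case_prod_beta)
  next
    case False
    have "q1 ` S = q ` S" using "1.prems" image_swap_eq[of a S b q] by (simp add: q1_def)
    then show ?thesis using "1.IH"(2)[OF g1_def _ False q1_def g2_def] "1.prems" False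
      by (auto simp: q1_def Let_def case_prod_beta)
  qed
qed simp_all

lemma cascade_image: "set w \<subseteq> S \<Longrightarrow> snd (cascade r w q) ` S = q ` S"
  using casc_image[of w S r "length w = 2" "{}" q] by (simp add: cascade_def case_prod_beta)

lemma double_sum_diff: "2 * (\<Sum>r = 1..n. n - r) = n * (n - 1)" for n :: nat
proof -
  have "(\<Sum>r = 1..n. n - r) = (\<Sum>r = 1..n. n - (n + 1 - r))"
    using sum.atLeastAtMost_rev[of "\<lambda>r. n - r" 1 n] by simp
  also have "\<dots> = (\<Sum>r = 1..n. r - 1)" by (rule sum.cong) auto
  finally have "2 * (\<Sum>r = 1..n. n - r) = (\<Sum>r = 1..n. n - r) + (\<Sum>r = 1..n. r - 1)"
    by simp
  also have "\<dots> = (\<Sum>r = 1..n. (n - r) + (r - 1))"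
    by (rule sum.distrib[symmetric])
  also have "\<dots> = (\<Sum>r = 1..n. n - 1)" by (rule sum.cong) auto
  finally show ?thesis by simp
qed

(* remdups keeps last occurrences, so qubit 1 need not sit on hd P. *)
lemma init_place_image: "P \<noteq> [] \<Longrightarrow> 1 \<in> init_place P ` set P"
proof -
  assume "P \<noteq> []"
  then have ne: "remdups P \<noteq> []" by simp
  define v where "v = remdups P ! 0"
  have "v \<in> set P" using ne by (metis v_def length_greater_0_conv nth_mem set_remdups)
  moreover have "(THE i. i < length (remdups P) \<and> remdups P ! i = v) = 0"
    using ne by (auto simp: v_def nth_eq_iff_index_eq)
  ultimately show ?thesis by (force simp: init_place_def)
qed

lemma shortest_covering_walk_from_hd:
  "shortest_covering_walk S E w \<Longrightarrow> shortest_covering_walk_from S E (hd w) w"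
  by (simp add: shortest_covering_walk_def shortest_covering_walk_from_def)

lemma min_cover_walk_length_eq:
  assumes "shortest_covering_walk V E w"
  shows "min_cover_walk_length V E = length w"
  unfolding min_cover_walk_length_def
proof (rule Least_equality)
  show "\<exists>xs. covering_walk V E xs \<and> length xs = length w"
    using assms by (auto simp: shortest_covering_walk_def)
qed (use assms in \<open>auto simp: shortest_covering_walk_def\<close>)

lemma valid_walks_next_qubit:
  assumes "valid_walks V E W" and "1 \<le> r" and "r \<le> card V"
  shows "r \<in> place W (r - 1) ` remaining V W (r - 1)"
proof (cases "r = 1")
  case True
  have "covering_walk V E (W 1)"
    using assms(1) by (simp add: valid_walks_def shortest_covering_walk_def)
  then show ?thesis
    using True init_place_image[of "W 1"] by (simp add: covering_walk_def walk_in_def)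
next
  case False
  with assms have "hd (W r) \<in> remaining V W (r - 1)" and "place W (r - 1) (hd (W r)) = r"
    by (simp_all add: valid_walks_def)
  then show ?thesis by (metis image_eqI)
qed

lemma valid_walks_shortest_from:
  assumes "valid_walks V E W" and "1 \<le> r" and "r \<le> card V"
  shows "shortest_covering_walk_from (remaining V W (r - 1)) E (hd (W r)) (W r)"
proof (cases "r = 1")
  case True
  then show ?thesis
    using assms(1) by (simp add: valid_walks_def shortest_covering_walk_from_hd)
next
  case False
  then show ?thesis using assms by (simp add: valid_walks_def)
qed

lemma card_remaining_le:
  assumes "valid_walks V E W"
  shows "r \<le> card V \<Longrightarrow> card (remaining V W r) + r \<le> card V"
proof (induction r)
  case (Suc r)
  let ?R = "remaining V W r"
  have "set (W (Suc r)) = ?R"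
    using valid_walks_shortest_from[OF assms _ Suc.prems]
    by (simp add: shortest_covering_walk_from_def covering_walk_def)
  then have "finite ?R" and "place W (Suc r) ` ?R = place W r ` ?R"
    using cascade_image[of "W (Suc r)" ?R] by (metis List.finite_set, simp)
  moreover have "Suc r \<in> place W r ` ?R"
    using valid_walks_next_qubit[OF assms _ Suc.prems] by simp
  ultimately obtain u where "u \<in> ?R" and "place W (Suc r) u = Suc r"
    by (metis imageE)
  then have "remaining V W (Suc r) \<subset> ?R" by auto
  then have "card (remaining V W (Suc r)) < card ?R"
    using \<open>finite ?R\<close> by (rule psubset_card_mono[rotated])
  then show ?case using Suc by simp
qed simp

lemma qft_cascade_cost_le:
  assumes "valid_walks V E W" and "symp E" and "1 \<le> r" and "r \<le> card V"
  shows "cnot_cost (fst (cascade r (W r) (place W (r - 1)))) \<le> 6 * (card V - r)"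
proof -
  let ?R = "remaining V W (r - 1)"
  have "length (W r) \<le> 2 * card ?R - 1"
    using valid_walks_shortest_from[OF assms(1,3,4)] assms(2)
    by (rule shortest_covering_walk_from_length_le)
  moreover have "card ?R + (r - 1) \<le> card V"
    using card_remaining_le[OF assms(1), of "r - 1"] assms(4) by simp
  ultimately have "3 * (length (W r) - 1) \<le> 6 * (card V - r)" using assms(3) by linarith
  then show ?thesis using cascade_cost_le order_trans by blast
qed

lemma qft_circuit_cost_le:
  assumes "valid_walks V E W" and "symp E"
  shows "cnot_cost (qft_circuit V W) \<le> 3 * (card V * (card V - 1))"
proof -
  let ?n = "card V"
  let ?c = "\<lambda>r. cnot_cost (fst (cascade r (W r) (place W (r - 1))))"
  have "cnot_cost (qft_circuit V W) \<le> (\<Sum>r\<leftarrow>[1..<?n + 1]. ?c r)"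
    unfolding qft_circuit_def
    using cnot_cost_concat_le[of "map (\<lambda>r. fst (cascade r (W r) (place W (r - 1)))) [1..<?n + 1]"]
    by (simp only: map_map comp_def)
  also have "\<dots> = sum ?c (set [1..<?n + 1])"
    by (rule sum_set_upt_conv_sum_list_nat[symmetric])
  also have "\<dots> = (\<Sum>r = 1..?n. ?c r)"
    by (rule sum.cong) auto
  also have "\<dots> \<le> (\<Sum>r = 1..?n. 6 * (?n - r))"
    using qft_cascade_cost_le[OF assms] by (intro sum_mono) auto
  also have "\<dots> = 3 * (2 * (\<Sum>r = 1..?n. ?n - r))"
    by (simp add: sum_distrib_left)
  finally show ?thesis by (simp only: double_sum_diff)
qed

theorem theorem6:
  fixes V :: "'a set" and E :: "'a \<Rightarrow> 'a \<Rightarrow> bool" and W :: "nat \<Rightarrow> 'a list"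
  assumes "finite V" and "V \<noteq> {}"
    and "\<forall>u v. E u v \<longrightarrow> u \<in> V \<and> v \<in> V"
    and "\<forall>u v. E u v \<longrightarrow> E v u"
    and "\<forall>v. \<not> E v v"
    and "\<forall>u\<in>V. \<forall>v\<in>V. E\<^sup>*\<^sup>* u v"
    and "valid_walks V E W"
  shows "int (cnot_cost (qft_circuit V W))
           \<le> 3 * int (min_cover_walk_length V E) * int (card V) - 2 * int (card V)"
proof -
  let ?n = "card V" and ?k = "min_cover_walk_length V E"
  have "symp E" using assms(4) by (simp add: symp_def)
  have "shortest_covering_walk V E (W 1)" using assms(7) by (simp add: valid_walks_def)
  then have "?k = length (W 1)" and "set (W 1) = V"
    by (auto simp: min_cover_walk_length_eq shortest_covering_walk_def covering_walk_def)
  then have "?n \<le> ?k" by (metis card_length)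
  have "cnot_cost (qft_circuit V W) \<le> 3 * (?n * (?n - 1))"
    using qft_circuit_cost_le[OF assms(7) \<open>symp E\<close>] .
  moreover have "int (3 * (?n * (?n - 1))) = 3 * int ?n * (int ?n - 1)"
    by (cases ?n) (simp_all add: algebra_simps)
  ultimately have "int (cnot_cost (qft_circuit V W)) \<le> 3 * int ?n * (int ?n - 1)"
    by (metis of_nat_mono)
  also have "\<dots> \<le> 3 * int ?k * int ?n - 2 * int ?n"
    using mult_right_mono[of "int ?n" "int ?k" "int ?n"] \<open>?n \<le> ?k\<close> by (simp add: algebra_simps)
  finally show ?thesis .
qed

end
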